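(* Let $\mathcal P$ be a 2-reflex orthostack made of four bricks with canonical contact rectangles, all three of which have type $1$ (i.e., its signature is $s_1s_2s_3$ with each $s_t\in\{\sqcup_1,\sqcap_1\}$). Then $\mathcal P$ is guarded by a single vertical closed face guard.
   Context: A 2-reflex orthostack is an orthogonal polyhedron with no reflex edge parallel to the vertical ($z$) axis all of whose horizontal cross-sections are simply connected; it is a stack of bricks $B_t=R_t\times[z_{t-1},z_t]$, $t=1,\dots,k$ (bottom to top), $z_0<\dots<z_k$, each $R_t$ an axis-parallel rectangle, $R_t\ne R_{t+1}$. The contact rectangle between $B_t$ and $B_{t+1}$ is $(R_t\cap R_{t+1})\times\{z_t\}$; it is canonical if one of $R_t,R_{t+1}$ is strictly contained in the other and their set difference is connected. The type of a canonical contact rectangle is the number $i\in\{1,2,3,4\}$ of sides of the smaller rectangle not contained in the boundary of the larger one. The contact is denoted $\sqcup_i$ if $R_t\subsetneq R_{t+1}$ and $\sqcap_i$ if $R_{t+1}\subsetneq R_t$. The signature is the sequence of these symbols for $t=1,\dots,k-1$, read bottom to top. A point $x$ is visible to $y$ if segment $xy$ does not meet the exterior of the polyhedron; a closed face guard is a face including its boundary; it guards the polyhedron if every point is visible from some point of it. A face is vertical if parallel to the $z$-axis. *)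

theory Defs
  imports "HOL-Analysis.Analysis"
begin

type_synonym point3 = "real \<times> real \<times> real"

text \<open>An axis-parallel rectangle [a,b] x [c,d] is encoded by its coordinates (a,b,c,d).\<close>
type_synonym rect = "real \<times> real \<times> real \<times> real"

definition rect_ok :: "rect \<Rightarrow> bool" where
  "rect_ok r = (case r of (a,b,c,d) \<Rightarrow> a < b \<and> c < d)"

definition rset :: "rect \<Rightarrow> (real \<times> real) set" where
  "rset r = (case r of (a,b,c,d) \<Rightarrow> cbox (a,c) (b,d))"

definition rsides :: "rect \<Rightarrow> (real \<times> real) set set" where
  "rsides r = (case r of (a,b,c,d) \<Rightarrow>
     {closed_segment (a,c) (b,c), closed_segment (b,c) (b,d),
      closed_segment (b,d) (a,d), closed_segment (a,d) (a,c)})"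

definition canonical_contact :: "rect \<Rightarrow> rect \<Rightarrow> bool" where
  "canonical_contact r s =
     ((rset r \<subset> rset s \<and> connected (rset s - rset r)) \<or>
      (rset s \<subset> rset r \<and> connected (rset r - rset s)))"

definition contact_type :: "rect \<Rightarrow> rect \<Rightarrow> nat" where
  "contact_type r s =
     (if rset r \<subset> rset s then card {e \<in> rsides r. \<not> e \<subseteq> frontier (rset s)}
      else card {e \<in> rsides s. \<not> e \<subseteq> frontier (rset r)})"

definition brick :: "rect \<Rightarrow> real \<Rightarrow> real \<Rightarrow> point3 set" where
  "brick r z0 z1 = {(x,y,w). (x,y) \<in> rset r \<and> z0 \<le> w \<and> w \<le> z1}"

definition orthostack :: "nat \<Rightarrow> (nat \<Rightarrow> rect) \<Rightarrow> (nat \<Rightarrow> real) \<Rightarrow> point3 set" where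
  "orthostack k R z = (\<Union>t\<in>{1..k}. brick (R t) (z (t - 1)) (z t))"

definition valid_orthostack :: "nat \<Rightarrow> (nat \<Rightarrow> rect) \<Rightarrow> (nat \<Rightarrow> real) \<Rightarrow> bool" where
  "valid_orthostack k R z =
     ((\<forall>t\<in>{1..k}. rect_ok (R t)) \<and> (\<forall>t<k. z t < z (Suc t)) \<and>
      (\<forall>t\<in>{1..<k}. rset (R t) \<noteq> rset (R (Suc t))))"

definition axis_dirs :: "point3 set" where
  "axis_dirs = {(1,0,0), (-1,0,0), (0,1,0), (0,-1,0), (0,0,1), (0,0,-1)}"

definition horizontal_dirs :: "point3 set" where
  "horizontal_dirs = {(1,0,0), (-1,0,0), (0,1,0), (0,-1,0)}"

text \<open>Relative-interior face points with outward normal u: near x, P is exactly the half-space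
  on the inner side of the plane through x orthogonal to u.\<close>
definition face_pts :: "point3 set \<Rightarrow> point3 \<Rightarrow> point3 set" where
  "face_pts P u = {x. \<exists>e>0. \<forall>y\<in>ball x e. (y \<in> P \<longleftrightarrow> inner (y - x) u \<le> 0)}"

text \<open>A closed face: closure of a maximal connected planar region of the boundary with
  a fixed outward normal.\<close>
definition closed_face :: "point3 set \<Rightarrow> point3 \<Rightarrow> point3 set \<Rightarrow> bool" where
  "closed_face P u F = (u \<in> axis_dirs \<and> (\<exists>C \<in> components (face_pts P u). F = closure C))"

definition vertical_closed_face :: "point3 set \<Rightarrow> point3 set \<Rightarrow> bool" where
  "vertical_closed_face P F = (\<exists>u \<in> horizontal_dirs. closed_face P u F)"

definition visible :: "point3 set \<Rightarrow> point3 \<Rightarrow> point3 \<Rightarrow> bool" where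
  "visible P x y = (closed_segment x y \<subseteq> P)"

definition guards :: "point3 set \<Rightarrow> point3 set \<Rightarrow> bool" where
  "guards P G = (\<forall>p\<in>P. \<exists>g\<in>G. visible P g p)"

end

theory Submission
  imports Defs
begin

text \<open>A type-1 contact moves exactly one of the four sides of a rectangle, so three such contacts
  leave some side -- say the right side x = b -- common to all four rectangles. The faces of the
  bricks in the plane x = b then form one connected vertical face (consecutive pieces overlap,
  since one rectangle contains the next), and every point of the stack sees its orthogonal
  projection onto that plane through its own brick.\<close>

text \<open>Coordinates 0, 1, 2, 3 of (a,b,c,d) are the left, right, bottom and top sides.\<close>
definition rcoord :: "rect \<Rightarrow> nat \<Rightarrow> real" where
  "rcoord r i = (case r of (a,b,c,d) \<Rightarrow> [a,b,c,d] ! i)"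

definition moved_sides :: "rect \<Rightarrow> rect \<Rightarrow> nat set" where
  "moved_sides r s = {i. i < 4 \<and> rcoord r i \<noteq> rcoord s i}"

lemma moved_sides_commute: "moved_sides r s = moved_sides s r"
  by (auto simp: moved_sides_def)

lemma mem_cbox_pair:
  fixes x y a b c d :: real
  shows "(x,y) \<in> cbox (a,c) (b,d) \<longleftrightarrow> a \<le> x \<and> x \<le> b \<and> c \<le> y \<and> y \<le> d"
  by (auto simp: cbox_Pair_eq)

lemma mem_box_pair:
  fixes x y a b c d :: real
  shows "(x,y) \<in> box (a,c) (b,d) \<longleftrightarrow> a < x \<and> x < b \<and> c < y \<and> y < d"
  by (auto simp: mem_box Basis_prod_def)

lemma rset_subset_iff:
  assumes "a < b" "c < d"
  shows "rset (a,b,c,d) \<subseteq> rset (a',b',c',d') \<longleftrightarrow> a' \<le> a \<and> b \<le> b' \<and> c' \<le> c \<and> d \<le> d'"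
  using assms by (auto simp: rset_def subset_box Basis_prod_def)

lemma segment_not_subset_frontier_cbox:
  fixes p q :: "real \<times> real"
  assumes "midpoint p q \<in> box l u"
  shows "\<not> closed_segment p q \<subseteq> frontier (cbox l u)"
  using assms midpoint_in_closed_segment[of p q] by (metis Diff_iff frontier_cbox subsetD)

lemma card_moved_sides_le_type:
  assumes ok: "rect_ok r" and sub: "rset r \<subseteq> rset s"
  shows "card (moved_sides r s) \<le> card {e \<in> rsides r. \<not> e \<subseteq> frontier (rset s)}"
proof -
  obtain a b c d a' b' c' d' where r: "r = (a,b,c,d)" and s: "s = (a',b',c',d')"
    by (metis prod.exhaust)
  have abcd: "a < b" "c < d" using ok by (simp_all add: r rect_ok_def)
  have le: "a' \<le> a" "b \<le> b'" "c' \<le> c" "d \<le> d'"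
    using sub rset_subset_iff[OF abcd] by (simp_all add: r s)
  txt \<open>The i-th side lies on the line fixed by coordinate i; if that coordinate moved, the
    side's midpoint is interior to s.\<close>
  define side where "side = [closed_segment (a,d) (a,c), closed_segment (b,c) (b,d),
    closed_segment (a,c) (b,c), closed_segment (b,d) (a,d)]"
  have "distinct side"
    using abcd by (auto simp: side_def closed_segment_eq doubleton_eq_iff)
  then have "inj_on ((!) side) (moved_sides r s)"
    by (rule inj_on_nth) (auto simp: moved_sides_def side_def)
  moreover have "(!) side ` moved_sides r s \<subseteq> {e \<in> rsides r. \<not> e \<subseteq> frontier (rset s)}"
  proof
    fix e assume "e \<in> (!) side ` moved_sides r s"
    then obtain i where i: "i < 4" "rcoord r i \<noteq> rcoord s i" and e: "e = side ! i"
      by (auto simp: moved_sides_def)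
    have "i = 0 \<or> i = 1 \<or> i = 2 \<or> i = 3" using i(1) by auto
    then show "e \<in> {e \<in> rsides r. \<not> e \<subseteq> frontier (rset s)}"
      using i(2) abcd le unfolding e side_def r s
      by (elim disjE; simp add: rcoord_def rsides_def rset_def;
          intro segment_not_subset_frontier_cbox; simp add: midpoint_def mem_box_pair)
  qed
  ultimately show ?thesis
    by (rule card_inj_on_le) (simp add: r rsides_def)
qed

lemma canonical_contact_moves_one_side:
  assumes "rect_ok r" "rect_ok s" "canonical_contact r s" "contact_type r s = 1"
  shows "card (moved_sides r s) \<le> 1"
proof (cases "rset r \<subset> rset s")
  case True
  then show ?thesis
    using assms card_moved_sides_le_type[of r s] by (simp add: contact_type_def)
next
  case False
  then have "rset s \<subset> rset r" using assms(3) by (simp add: canonical_contact_def)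
  then show ?thesis
    using assms False card_moved_sides_le_type[of s r]
    by (simp add: contact_type_def moved_sides_commute)
qed

lemma canonical_contact_overlap:
  assumes "rect_ok (a,b,c,d)" "rect_ok (a',b',c',d')" "canonical_contact (a,b,c,d) (a',b',c',d')"
  shows "max a a' < min b b' \<and> max c c' < min d d'"
proof -
  have ok: "a < b" "c < d" "a' < b'" "c' < d'" using assms(1,2) by (simp_all add: rect_ok_def)
  have "rset (a,b,c,d) \<subseteq> rset (a',b',c',d') \<or> rset (a',b',c',d') \<subseteq> rset (a,b,c,d)"
    using assms(3) by (auto simp: canonical_contact_def)
  then show ?thesis
    using ok rset_subset_iff[of a b c d a' b' c' d'] rset_subset_iff[of a' b' c' d' a b c d]
    by auto
qed

lemma side_fixed_by_few_moves:
  fixes R :: "nat \<Rightarrow> rect"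
  assumes "k \<le> 4" and moves: "\<forall>t\<in>{1..<k}. card (moved_sides (R t) (R (Suc t))) \<le> 1"
  obtains i where "i < 4" "\<forall>t\<in>{1..k}. rcoord (R t) i = rcoord (R 1) i"
proof -
  define U where "U = (\<Union>t\<in>{1..<k}. moved_sides (R t) (R (Suc t)))"
  have "card U \<le> (\<Sum>t\<in>{1..<k}. card (moved_sides (R t) (R (Suc t))))"
    unfolding U_def by (rule card_UN_le) simp
  also have "\<dots> \<le> of_nat (card {1..<k}) * 1"
    by (rule sum_bounded_above) (use moves in simp)
  finally have "card U < card {..<4::nat}" using \<open>k \<le> 4\<close> by simp
  moreover have "finite U" unfolding U_def moved_sides_def by auto
  ultimately have "\<not> {..<4} \<subseteq> U" using card_mono by (meson not_le)
  then obtain i where i: "i < 4" "i \<notin> U" by auto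
  have fixed: "rcoord (R t) i = rcoord (R 1) i" if "1 \<le> t" "t \<le> k" for t
    using that
  proof (induction t rule: dec_induct)
    case (step n)
    then have "n \<in> {1..<k}" by simp
    then have "i \<notin> moved_sides (R n) (R (Suc n))" using i(2) unfolding U_def by blast
    then have "rcoord (R (Suc n)) i = rcoord (R n) i" using i(1) by (simp add: moved_sides_def)
    moreover have "rcoord (R n) i = rcoord (R 1) i" using step.IH step.prems by simp
    ultimately show ?case by simp
  qed simp
  show ?thesis by (rule that[OF i(1)]) (intro ballI fixed; simp)
qed

lemma face_pts_of_open_nbhd:
  fixes P :: "point3 set"
  assumes "P \<subseteq> {q. q \<bullet> u \<le> h}" "x \<bullet> u = h" "open N" "x \<in> N"
    and "\<And>q. q \<in> N \<Longrightarrow> q \<bullet> u \<le> h \<Longrightarrow> q \<in> P"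
  shows "x \<in> face_pts P u"
proof -
  obtain \<epsilon> where "\<epsilon> > 0" "ball x \<epsilon> \<subseteq> N" using \<open>open N\<close> \<open>x \<in> N\<close> open_contains_ball by blast
  then have "\<forall>y\<in>ball x \<epsilon>. y \<in> P \<longleftrightarrow> (y - x) \<bullet> u \<le> 0"
    using assms by (auto simp: inner_diff_left)
  then show ?thesis
    unfolding face_pts_def using \<open>\<epsilon> > 0\<close> by blast
qed

text \<open>A stack of bricks written in an orthonormal frame: u is the outward normal of the common
  wall p \<bullet> u = h, v runs horizontally along the wall and e is vertical.\<close>
locale wall_stack =
  fixes u v e :: point3 and k :: nat and \<alpha> \<beta> \<gamma> z :: "nat \<Rightarrow> real" and h :: real
  assumes orth: "u \<bullet> u = 1" "v \<bullet> v = 1" "e \<bullet> e = 1" "u \<bullet> v = 0" "u \<bullet> e = 0" "v \<bullet> e = 0"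
    and span: "\<And>p. p = (p \<bullet> v) *\<^sub>R v + (p \<bullet> u) *\<^sub>R u + (p \<bullet> e) *\<^sub>R e"
    and nonempty: "1 \<le> k"
    and bricks: "\<And>t. t \<in> {1..k} \<Longrightarrow> \<alpha> t < \<beta> t \<and> \<gamma> t < h"
    and heights: "\<And>t. t < k \<Longrightarrow> z t < z (Suc t)"
    and overlap: "\<And>t. t \<in> {1..<k} \<Longrightarrow> max (\<alpha> t) (\<alpha> (Suc t)) < min (\<beta> t) (\<beta> (Suc t))"
begin

definition wbrick :: "nat \<Rightarrow> point3 set" where
  "wbrick t = {p. \<alpha> t \<le> p \<bullet> v \<and> p \<bullet> v \<le> \<beta> t \<and> \<gamma> t \<le> p \<bullet> u \<and> p \<bullet> u \<le> h
                 \<and> z (t - 1) \<le> p \<bullet> e \<and> p \<bullet> e \<le> z t}"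

definition stack :: "point3 set" where
  "stack = (\<Union>t\<in>{1..k}. wbrick t)"

definition wall_pt :: "real \<times> real \<Rightarrow> point3" where
  "wall_pt x = fst x *\<^sub>R v + h *\<^sub>R u + snd x *\<^sub>R e"

definition wall_piece :: "nat \<Rightarrow> point3 set" where
  "wall_piece t = wall_pt ` ({\<alpha> t<..<\<beta> t} \<times> {z (t - 1)<..<z t})"

text \<open>Consecutive wall pieces only touch along the line at height z t; the joint, over their
  common v-range, straddles that line.\<close>
definition wall_joint :: "nat \<Rightarrow> point3 set" where
  "wall_joint t = wall_pt ` ({max (\<alpha> t) (\<alpha> (Suc t))<..<min (\<beta> t) (\<beta> (Suc t))}
                             \<times> {z (t - 1)<..<z (Suc t)})"

lemma orth_commute: "v \<bullet> u = 0" "e \<bullet> u = 0" "e \<bullet> v = 0"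
  using orth by (simp_all add: inner_commute)

lemma wall_pt_coords: "wall_pt x \<bullet> v = fst x" "wall_pt x \<bullet> u = h" "wall_pt x \<bullet> e = snd x"
  using orth orth_commute by (simp_all add: wall_pt_def inner_add_left)

lemma continuous_on_wall_pt: "continuous_on A wall_pt"
  unfolding wall_pt_def by (intro continuous_intros)

lemma stack_below_wall: "stack \<subseteq> {q. q \<bullet> u \<le> h}"
  by (auto simp: stack_def wbrick_def)

lemma wall_piece_face_pts:
  assumes t: "t \<in> {1..k}"
  shows "wall_piece t \<subseteq> face_pts stack u"
proof
  fix x assume "x \<in> wall_piece t"
  let ?N = "{q. \<alpha> t < q \<bullet> v \<and> q \<bullet> v < \<beta> t \<and> \<gamma> t < q \<bullet> u \<and> z (t - 1) < q \<bullet> e \<and> q \<bullet> e < z t}"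
  show "x \<in> face_pts stack u"
  proof (rule face_pts_of_open_nbhd[OF stack_below_wall, of _ ?N])
    show "open ?N" by (intro open_Collect_conj open_Collect_less continuous_intros)
    show "x \<bullet> u = h" "x \<in> ?N"
      using \<open>x \<in> wall_piece t\<close> bricks[OF t] by (auto simp: wall_piece_def wall_pt_coords)
    show "q \<in> stack" if "q \<in> ?N" "q \<bullet> u \<le> h" for q
    proof -
      have "q \<in> wbrick t" using that by (auto simp: wbrick_def)
      then show ?thesis using t by (auto simp: stack_def)
    qed
  qed
qed

lemma wall_joint_face_pts:
  assumes t: "t \<in> {1..<k}"
  shows "wall_joint t \<subseteq> face_pts stack u"
proof
  fix x assume "x \<in> wall_joint t"
  let ?N = "{q. max (\<alpha> t) (\<alpha> (Suc t)) < q \<bullet> v \<and> q \<bullet> v < min (\<beta> t) (\<beta> (Suc t))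
               \<and> max (\<gamma> t) (\<gamma> (Suc t)) < q \<bullet> u \<and> z (t - 1) < q \<bullet> e \<and> q \<bullet> e < z (Suc t)}"
  have tt: "t \<in> {1..k}" "Suc t \<in> {1..k}" using t by auto
  show "x \<in> face_pts stack u"
  proof (rule face_pts_of_open_nbhd[OF stack_below_wall, of _ ?N])
    show "open ?N" by (intro open_Collect_conj open_Collect_less continuous_intros)
    show "x \<bullet> u = h" "x \<in> ?N"
      using \<open>x \<in> wall_joint t\<close> bricks[OF tt(1)] bricks[OF tt(2)]
      by (auto simp: wall_joint_def wall_pt_coords)
    show "q \<in> stack" if "q \<in> ?N" "q \<bullet> u \<le> h" for q
    proof (cases "q \<bullet> e \<le> z t")
      case True
      then have "q \<in> wbrick t" using that by (auto simp: wbrick_def)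
      then show ?thesis using tt(1) by (auto simp: stack_def)
    next
      case False
      then have "q \<in> wbrick (Suc t)" using that by (auto simp: wbrick_def)
      then show ?thesis using tt(2) by (auto simp: stack_def)
    qed
  qed
qed

lemma connected_wall_piece: "connected (wall_piece t)"
  and connected_wall_joint: "connected (wall_joint t)"
  unfolding wall_piece_def wall_joint_def
  by (intro connected_continuous_image continuous_on_wall_pt convex_connected convex_Times
      convex_real_interval)+

lemma wall_joint_meets_pieces:
  assumes t: "t \<in> {1..<k}"
  shows "wall_piece t \<inter> wall_joint t \<noteq> {}" "wall_joint t \<inter> wall_piece (Suc t) \<noteq> {}"
proof -
  define m where "m = (max (\<alpha> t) (\<alpha> (Suc t)) + min (\<beta> t) (\<beta> (Suc t))) / 2"
  have m: "max (\<alpha> t) (\<alpha> (Suc t)) < m" "m < min (\<beta> t) (\<beta> (Suc t))"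
    using overlap[OF t] by (auto simp: m_def)
  have z: "z (t - 1) < z t" "z t < z (Suc t)" using heights[of "t - 1"] heights[of t] t by auto
  have "wall_pt (m, (z (t - 1) + z t) / 2) \<in> wall_piece t \<inter> wall_joint t"
    unfolding wall_piece_def wall_joint_def using m z by (intro IntI imageI) auto
  then show "wall_piece t \<inter> wall_joint t \<noteq> {}" by blast
  have "wall_pt (m, (z t + z (Suc t)) / 2) \<in> wall_joint t \<inter> wall_piece (Suc t)"
    unfolding wall_piece_def wall_joint_def using m z by (intro IntI imageI) auto
  then show "wall_joint t \<inter> wall_piece (Suc t) \<noteq> {}" by blast
qed

lemma wall_pieces_in_one_component:
  obtains C where "C \<in> components (face_pts stack u)" "\<And>t. t \<in> {1..k} \<Longrightarrow> wall_piece t \<subseteq> C"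
proof -
  have one: "1 \<in> {1..k}" using nonempty by simp
  obtain x0 where x0: "x0 \<in> wall_piece 1"
  proof
    show "wall_pt ((\<alpha> 1 + \<beta> 1) / 2, (z 0 + z 1) / 2) \<in> wall_piece 1"
      using bricks[OF one] heights[of 0] nonempty unfolding wall_piece_def by (intro imageI) auto
  qed
  define C where "C = connected_component_set (face_pts stack u) x0"
  have C: "C \<in> components (face_pts stack u)"
    using x0 wall_piece_face_pts[OF one] unfolding C_def by (auto intro: componentsI)
  have x0_C: "x0 \<in> C"
    using x0 wall_piece_face_pts[OF one] by (auto simp: C_def connected_component_refl)
  have "wall_piece t \<subseteq> C" if "1 \<le> t" "t \<le> k" for t
    using that
  proof (induction t rule: dec_induct)
    case base
    show ?case
      using components_maximal[OF C connected_wall_piece wall_piece_face_pts[OF one]] x0 x0_C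
      by blast
  next
    case (step n)
    then have n: "n \<in> {1..<k}" by simp
    have "wall_joint n \<subseteq> C"
      using components_maximal[OF C connected_wall_joint wall_joint_face_pts[OF n]]
        step.IH wall_joint_meets_pieces(1)[OF n] n by auto
    moreover have "Suc n \<in> {1..k}" using n by simp
    ultimately show ?case
      using components_maximal[OF C connected_wall_piece wall_piece_face_pts]
        wall_joint_meets_pieces(2)[OF n] by blast
  qed
  then show ?thesis using that C by auto
qed

lemma wbrick_visible_from_wall:
  assumes t: "t \<in> {1..k}" and p: "p \<in> wbrick t"
  shows "\<exists>g\<in>closure (wall_piece t). closed_segment g p \<subseteq> wbrick t"
proof
  define g where "g = wall_pt (p \<bullet> v, p \<bullet> e)"
  have "z (t - 1) < z t" using heights[of "t - 1"] t by auto
  then have "(p \<bullet> v, p \<bullet> e) \<in> closure ({\<alpha> t<..<\<beta> t} \<times> {z (t - 1)<..<z t})"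
    using p bricks[OF t] by (simp add: closure_Times wbrick_def)
  then show "g \<in> closure (wall_piece t)"
    using continuous_image_closure_subset[OF continuous_on_wall_pt]
    unfolding g_def wall_piece_def by blast
  show "closed_segment g p \<subseteq> wbrick t"
  proof
    fix y assume "y \<in> closed_segment g p"
    then obtain l where l: "0 \<le> l" "l \<le> 1" and y: "y = (1 - l) *\<^sub>R g + l *\<^sub>R p"
      by (auto simp: closed_segment_def)
    have "y = p + ((1 - l) * (h - p \<bullet> u)) *\<^sub>R u"
      unfolding y g_def wall_pt_def by (subst (3 4) span) (simp add: algebra_simps)
    then have "y \<bullet> v = p \<bullet> v" "y \<bullet> e = p \<bullet> e" "y \<bullet> u = p \<bullet> u + (1 - l) * (h - p \<bullet> u)"
      using orth orth_commute by (simp_all add: inner_add_left)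
    moreover have "0 \<le> (1 - l) * (h - p \<bullet> u)" "(1 - l) * (h - p \<bullet> u) \<le> h - p \<bullet> u"
      using l p by (simp_all add: wbrick_def mult_left_le_one_le)
    ultimately show "y \<in> wbrick t" using p by (auto simp: wbrick_def)
  qed
qed

theorem stack_guarded_by_wall: "\<exists>C\<in>components (face_pts stack u). guards stack (closure C)"
proof -
  obtain C where C: "C \<in> components (face_pts stack u)"
    and pieces: "\<And>t. t \<in> {1..k} \<Longrightarrow> wall_piece t \<subseteq> C"
    using wall_pieces_in_one_component by blast
  have "guards stack (closure C)" unfolding guards_def visible_def
  proof
    fix p assume "p \<in> stack"
    then obtain t where t: "t \<in> {1..k}" and p: "p \<in> wbrick t" by (auto simp: stack_def)
    then obtain g where "g \<in> closure (wall_piece t)" "closed_segment g p \<subseteq> wbrick t"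
      using wbrick_visible_from_wall by blast
    moreover have "closure (wall_piece t) \<subseteq> closure C" using pieces[OF t] by (rule closure_mono)
    moreover have "wbrick t \<subseteq> stack" using t by (auto simp: stack_def)
    ultimately show "\<exists>g\<in>closure C. closed_segment g p \<subseteq> stack" by blast
  qed
  then show ?thesis using C by blast
qed

end

lemma orthostack_guarded_by_fixed_side:
  fixes R :: "nat \<Rightarrow> rect" and z :: "nat \<Rightarrow> real"
  assumes valid: "valid_orthostack k R z" and "1 \<le> k"
    and canonical: "\<forall>t\<in>{1..<k}. canonical_contact (R t) (R (Suc t))"
    and "i < 4" and fixed: "\<forall>t\<in>{1..k}. rcoord (R t) i = rcoord (R 1) i"
  shows "\<exists>F. vertical_closed_face (orthostack k R z) F \<and> guards (orthostack k R z) F"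
proof -
  define P where "P = orthostack k R z"
  define a where "a t = fst (R t)" for t
  define b where "b t = fst (snd (R t))" for t
  define c where "c t = fst (snd (snd (R t)))" for t
  define d where "d t = snd (snd (snd (R t)))" for t
  have R: "R t = (a t, b t, c t, d t)" for t by (simp add: a_def b_def c_def d_def)
  have ok: "a t < b t" "c t < d t" if "t \<in> {1..k}" for t
    using valid that by (simp_all add: valid_orthostack_def rect_ok_def R)
  have heights: "\<And>t. t < k \<Longrightarrow> z t < z (Suc t)" using valid by (simp add: valid_orthostack_def)
  have overlap: "max (a t) (a (Suc t)) < min (b t) (b (Suc t))"
    "max (c t) (c (Suc t)) < min (d t) (d (Suc t))" if t: "t \<in> {1..<k}" for t
  proof -
    have "rect_ok (R t)" "rect_ok (R (Suc t))" using valid t by (auto simp: valid_orthostack_def)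
    then show "max (a t) (a (Suc t)) < min (b t) (b (Suc t))"
      "max (c t) (c (Suc t)) < min (d t) (d (Suc t))"
      using canonical_contact_overlap canonical t unfolding R by blast+
  qed
  have P: "P = (\<Union>t\<in>{1..k}. {(x, y, w). a t \<le> x \<and> x \<le> b t \<and> c t \<le> y \<and> y \<le> d t
                                     \<and> z (t - 1) \<le> w \<and> w \<le> z t})"
    unfolding P_def orthostack_def brick_def rset_def R by (simp add: mem_cbox_pair)
  have guarded: "\<exists>F. vertical_closed_face P F \<and> guards P F"
    if "\<exists>C\<in>components (face_pts P u). guards P (closure C)" "u \<in> horizontal_dirs" for u
    using that by (auto simp: vertical_closed_face_def closed_face_def horizontal_dirs_def axis_dirs_def)
  consider "i = 0" | "i = 1" | "i = 2" | "i = 3" using \<open>i < 4\<close> by linarith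
  then have "\<exists>F. vertical_closed_face P F \<and> guards P F"
  proof cases
    case 1
    then have "a t = a 1" if "t \<in> {1..k}" for t
      using fixed[rule_format, OF that] by (simp add: rcoord_def R)
    then obtain h0 where side: "\<And>t. t \<in> {1..k} \<Longrightarrow> a t = h0" by blast
    interpret W: wall_stack "(-1,0,0)" "(0,1,0)" "(0,0,1)" k c d "\<lambda>t. - b t" z "- h0"
      by unfold_locales (use ok heights overlap side \<open>1 \<le> k\<close> in \<open>auto simp: max_def min_def\<close>)
    have "P = W.stack"
      unfolding P W.stack_def W.wbrick_def by (rule SUP_cong[OF refl]) (auto simp: side)
    then have "\<exists>C\<in>components (face_pts P (-1,0,0)). guards P (closure C)"
      using W.stack_guarded_by_wall by simp
    then show ?thesis by (rule guarded) (simp add: horizontal_dirs_def)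
  next
    case 2
    then have "b t = b 1" if "t \<in> {1..k}" for t
      using fixed[rule_format, OF that] by (simp add: rcoord_def R)
    then obtain h0 where side: "\<And>t. t \<in> {1..k} \<Longrightarrow> b t = h0" by blast
    interpret W: wall_stack "(1,0,0)" "(0,1,0)" "(0,0,1)" k c d a z h0
      by unfold_locales (use ok heights overlap side \<open>1 \<le> k\<close> in \<open>auto simp: max_def min_def\<close>)
    have "P = W.stack"
      unfolding P W.stack_def W.wbrick_def by (rule SUP_cong[OF refl]) (auto simp: side)
    then have "\<exists>C\<in>components (face_pts P (1,0,0)). guards P (closure C)"
      using W.stack_guarded_by_wall by simp
    then show ?thesis by (rule guarded) (simp add: horizontal_dirs_def)
  next
    case 3
    then have "c t = c 1" if "t \<in> {1..k}" for t
      using fixed[rule_format, OF that] by (simp add: rcoord_def R)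
    then obtain h0 where side: "\<And>t. t \<in> {1..k} \<Longrightarrow> c t = h0" by blast
    interpret W: wall_stack "(0,-1,0)" "(1,0,0)" "(0,0,1)" k a b "\<lambda>t. - d t" z "- h0"
      by unfold_locales (use ok heights overlap side \<open>1 \<le> k\<close> in \<open>auto simp: max_def min_def\<close>)
    have "P = W.stack"
      unfolding P W.stack_def W.wbrick_def by (rule SUP_cong[OF refl]) (auto simp: side)
    then have "\<exists>C\<in>components (face_pts P (0,-1,0)). guards P (closure C)"
      using W.stack_guarded_by_wall by simp
    then show ?thesis by (rule guarded) (simp add: horizontal_dirs_def)
  next
    case 4
    then have "d t = d 1" if "t \<in> {1..k}" for t
      using fixed[rule_format, OF that] by (simp add: rcoord_def R)
    then obtain h0 where side: "\<And>t. t \<in> {1..k} \<Longrightarrow> d t = h0" by blast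
    interpret W: wall_stack "(0,1,0)" "(1,0,0)" "(0,0,1)" k a b c z h0
      by unfold_locales (use ok heights overlap side \<open>1 \<le> k\<close> in \<open>auto simp: max_def min_def\<close>)
    have "P = W.stack"
      unfolding P W.stack_def W.wbrick_def by (rule SUP_cong[OF refl]) (auto simp: side)
    then have "\<exists>C\<in>components (face_pts P (0,1,0)). guards P (closure C)"
      using W.stack_guarded_by_wall by simp
    then show ?thesis by (rule guarded) (simp add: horizontal_dirs_def)
  qed
  then show ?thesis by (simp add: P_def)
qed

theorem orthostack_type_one_guarded:
  fixes R :: "nat \<Rightarrow> rect" and z :: "nat \<Rightarrow> real"
  assumes valid: "valid_orthostack k R z" and "1 \<le> k" "k \<le> 4"
    and contacts: "\<forall>t\<in>{1..<k}. canonical_contact (R t) (R (Suc t)) \<and> contact_type (R t) (R (Suc t)) = 1"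
  shows "\<exists>F. vertical_closed_face (orthostack k R z) F \<and> guards (orthostack k R z) F"
proof -
  have "\<forall>t\<in>{1..<k}. card (moved_sides (R t) (R (Suc t))) \<le> 1"
  proof
    fix t assume t: "t \<in> {1..<k}"
    show "card (moved_sides (R t) (R (Suc t))) \<le> 1"
    proof (rule canonical_contact_moves_one_side)
      show "rect_ok (R t)" "rect_ok (R (Suc t))"
        using valid t by (auto simp: valid_orthostack_def)
    qed (use contacts t in auto)
  qed
  then obtain i where i: "i < 4" and fixed: "\<forall>t\<in>{1..k}. rcoord (R t) i = rcoord (R 1) i"
    by (rule side_fixed_by_few_moves[OF \<open>k \<le> 4\<close>])
  show ?thesis
  proof (rule orthostack_guarded_by_fixed_side[OF valid \<open>1 \<le> k\<close> _ i fixed])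
    show "\<forall>t\<in>{1..<k}. canonical_contact (R t) (R (Suc t))" using contacts by blast
  qed
qed

theorem mainTheorem11:
  fixes R :: "nat \<Rightarrow> rect" and z :: "nat \<Rightarrow> real"
  assumes "valid_orthostack 4 R z"
    and "\<forall>t\<in>{1..3}. canonical_contact (R t) (R (Suc t)) \<and> contact_type (R t) (R (Suc t)) = 1"
  shows "\<exists>F. vertical_closed_face (orthostack 4 R z) F \<and> guards (orthostack 4 R z) F"
proof (rule orthostack_type_one_guarded[OF assms(1)])
  have "{1..<4} = {1..3::nat}" by auto
  then show "\<forall>t\<in>{1..<4}. canonical_contact (R t) (R (Suc t)) \<and> contact_type (R t) (R (Suc t)) = 1"
    using assms(2) by (simp only:)
qed simp_all

end
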